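(* Fix integers $n,L\ge1$ and $s>0$. Consider the $L$-layer linear Transformer acting on $Z_l\in\mathbb{R}^{n\times n}$ by $$Z_{l+1}=Z_l+W^V_l Z_l Z_l^\top (W^Q_l)^\top W^K_l Z_l+W^R_l Z_l,$$ with weights $W^V_l,W^Q_l,W^K_l,W^R_l\in\mathbb{R}^{n\times n}$, and for a graph Laplacian $\mathcal{L}$ let the input be $Z_0^\top=I_{n\times n}-3^{-L}s\mathcal{L}$. Then there exists a choice of the weights such that for every graph on $n$ vertices whose Laplacian $\mathcal{L}$ has largest eigenvalue $\lambda_{\max}$ satisfying $s\lambda_{\max}\le 3^L$, $$\left\|Z_L-\exp(-s\mathcal{L})\right\|_2\le 3^{-L+1}s^2\lambda_{\max}^2 .$$
   Context: A graph has $n$ vertices, $d$ edges and positive edge resistances $r_j$; graphs are connected. With an arbitrary edge orientation, the incidence matrix $B\in\mathbb{R}^{n\times d}$ has $B_{ij}=\mp1/\sqrt{r_j}$ if $e_j$ leaves/enters vertex $i$ and $0$ otherwise, and the Laplacian is $\mathcal{L}=BB^\top$. $\exp(-s\mathcal{L})$ is the matrix exponential and $\|\cdot\|_2$ the spectral norm. *)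

theory Defs
  imports "HOL-Analysis.Analysis"
begin

text \<open>A weighted graph on the vertex type 'n: a list of edges (u, v, r), oriented from u to v,
  with resistance r. Multiple edges are allowed, self-loops are not.\<close>
type_synonym 'n graph = "('n \<times> 'n \<times> real) list"

definition adj_rel :: "'n graph \<Rightarrow> ('n \<times> 'n) set" where
  "adj_rel E = {(u, v). \<exists>r. (u, v, r) \<in> set E \<or> (v, u, r) \<in> set E}"

definition valid_graph :: "'n graph \<Rightarrow> bool" where
  "valid_graph E \<longleftrightarrow>
     (\<forall>(u, v, r) \<in> set E. u \<noteq> v \<and> r > 0) \<and>
     (\<forall>a b. (a, b) \<in> (adj_rel E)\<^sup>*)"

definition incidence :: "'n graph \<Rightarrow> 'n \<Rightarrow> nat \<Rightarrow> real" where
  "incidence E i j = (case E ! j of (u, v, r) \<Rightarrow>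
       if i = u then - 1 / sqrt r else if i = v then 1 / sqrt r else 0)"

definition laplacian :: "'n::finite graph \<Rightarrow> real^'n^'n" where
  "laplacian E = (\<chi> i k. \<Sum>j<length E. incidence E i j * incidence E k j)"

definition is_eigenvalue :: "real^'n^'n \<Rightarrow> real \<Rightarrow> bool" where
  "is_eigenvalue A \<mu> \<longleftrightarrow> (\<exists>v. v \<noteq> 0 \<and> A *v v = \<mu> *\<^sub>R v)"

definition lambda_max :: "real^'n^'n \<Rightarrow> real" where
  "lambda_max A = Max {\<mu>. is_eigenvalue A \<mu>}"

fun mat_pow :: "real^'n^'n \<Rightarrow> nat \<Rightarrow> real^'n^'n" where
  "mat_pow A 0 = mat 1"
| "mat_pow A (Suc k) = A ** mat_pow A k"

definition mat_exp :: "real^'n^'n \<Rightarrow> real^'n^'n" where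
  "mat_exp A = (\<Sum>k. (1 / fact k) *\<^sub>R mat_pow A k)"

definition spec_norm :: "real^'n^'n \<Rightarrow> real" where
  "spec_norm A = onorm (\<lambda>x. A *v x)"

definition layer :: "real^'n^'n \<Rightarrow> real^'n^'n \<Rightarrow> real^'n^'n \<Rightarrow> real^'n^'n \<Rightarrow> real^'n^'n \<Rightarrow> real^'n^'n" where
  "layer WV WQ WK WR Z = Z + WV ** Z ** transpose Z ** transpose WQ ** WK ** Z + WR ** Z"

fun transformer :: "(nat \<Rightarrow> real^'n^'n) \<Rightarrow> (nat \<Rightarrow> real^'n^'n) \<Rightarrow> (nat \<Rightarrow> real^'n^'n) \<Rightarrow>
    (nat \<Rightarrow> real^'n^'n) \<Rightarrow> real^'n^'n \<Rightarrow> nat \<Rightarrow> real^'n^'n" where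
  "transformer WV WQ WK WR Z0 0 = Z0"
| "transformer WV WQ WK WR Z0 (Suc l) =
     layer (WV l) (WQ l) (WK l) (WR l) (transformer WV WQ WK WR Z0 l)"

end

theory Submission
  imports Defs
begin

text \<open>With \<open>W\<^sup>V = W\<^sup>Q = W\<^sup>K = I\<close> and \<open>W\<^sup>R = -I\<close> a layer maps a symmetric \<open>Z\<close> to
  \<open>Z Z\<^sup>T Z = Z\<^sup>3\<close>, so the network computes \<open>(I - s\<L>/N)\<^sup>N\<close> with \<open>N = 3\<^sup>L\<close>.
  The Laplacian is symmetric positive semidefinite, hence has an orthonormal eigenbasis (obtained
  by repeatedly maximising the Rayleigh quotient); in that basis both \<open>(I - s\<L>/N)\<^sup>N\<close> and
  \<open>exp (-s\<L>)\<close> are diagonal, and the spectral norm of their difference is the largest value of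
  \<open>|(1 - y/N)\<^sup>N - e\<^sup>-\<^sup>y|\<close> over \<open>y = s\<mu>\<close>, \<open>\<mu>\<close> an eigenvalue. For \<open>0 \<le> y \<le> N\<close>
  this is at most \<open>N (e\<^sup>-\<^sup>y\<^sup>/\<^sup>N - (1 - y/N)) \<le> y\<^sup>2/N\<close>, a third of the claimed bound.\<close>

lemma quadratic_nonneg_imp_linear_coeff_zero:
  fixes b c :: real
  assumes "\<And>t. 0 \<le> 2 * t * b + t\<^sup>2 * c"
  shows "b = 0"
proof -
  define a where "a = \<bar>c\<bar> + 1"
  define t where "t = - b / a"
  have a: "a > 0" "c \<le> a" by (simp_all add: a_def)
  have "t\<^sup>2 * c \<le> t\<^sup>2 * a" using a by (intro mult_left_mono) auto
  also have "\<dots> = - t * b" using a by (simp add: t_def power2_eq_square field_simps)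
  finally have "0 \<le> t * b" using assms[of t] by linarith
  then have "b * b \<le> 0" using a by (simp add: t_def field_simps)
  then show ?thesis by (metis antisym mult_eq_0_iff zero_le_square)
qed

lemma symmetric_matrix_inner:
  fixes K :: "real^'n::finite^'n"
  assumes "transpose K = K"
  shows "(K *v x) \<bullet> y = x \<bullet> (K *v y)"
  by (metis assms dot_lmul_matrix transpose_matrix_vector)

lemma rayleigh_max_imp_eigenvector:
  fixes K :: "real^'n::finite^'n"
  assumes sym: "transpose K = K" and S: "subspace S" and inv: "\<forall>x\<in>S. K *v x \<in> S"
    and max: "\<And>w. w \<in> S \<Longrightarrow> w \<bullet> (K *v w) \<le> \<mu> * (w \<bullet> w)"
    and v: "v \<in> S" "v \<bullet> (K *v v) = \<mu> * (v \<bullet> v)"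
  shows "K *v v = \<mu> *\<^sub>R v"
proof -
  define Q where "Q w = \<mu> * (w \<bullet> w) - w \<bullet> (K *v w)" for w
  define d where "d = K *v v - \<mu> *\<^sub>R v"
  have "d \<in> S" unfolding d_def using S inv v by (simp add: subspace_diff subspace_scale)
  \<comment> \<open>\<open>Q\<close> is nonnegative on \<open>S\<close> and vanishes at \<open>v\<close>, so \<open>t \<mapsto> Q (v + t d)\<close> has no linear term\<close>
  have "0 \<le> 2 * t * (- (d \<bullet> d)) + t\<^sup>2 * Q d" for t
  proof -
    have "v + t *\<^sub>R d \<in> S" using S v \<open>d \<in> S\<close> by (simp add: subspace_add subspace_scale)
    then have "0 \<le> Q (v + t *\<^sub>R d)" using max by (simp add: Q_def)
    also have "Q (v + t *\<^sub>R d) = Q v + 2 * t * (\<mu> * (v \<bullet> d) - d \<bullet> (K *v v)) + t\<^sup>2 * Q d"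
      using symmetric_matrix_inner[OF sym, of v d]
      by (simp add: Q_def matrix_vector_right_distrib matrix_vector_mult_scaleR inner_add_left
          inner_add_right power2_eq_square inner_commute algebra_simps)
    also have "\<mu> * (v \<bullet> d) - d \<bullet> (K *v v) = - (d \<bullet> d)"
      unfolding d_def by (simp add: inner_diff_left inner_diff_right inner_commute algebra_simps)
    finally show ?thesis using v(2) by (simp add: Q_def)
  qed
  then have "d \<bullet> d = 0" by (metis quadratic_nonneg_imp_linear_coeff_zero neg_equal_0_iff_equal)
  then show ?thesis by (simp add: d_def)
qed

lemma rayleigh_quotient_attains_max:
  fixes K :: "real^'n::finite^'n"
  assumes S: "subspace S" and nontriv: "S \<noteq> {0}"
  obtains v where "v \<in> S" "norm v = 1"
    "\<And>w. w \<in> S \<Longrightarrow> w \<bullet> (K *v w) \<le> (v \<bullet> (K *v v)) * (w \<bullet> w)"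
proof -
  define T where "T = S \<inter> sphere 0 1"
  define q where "q y = y \<bullet> (K *v y)" for y
  have normalize_in_T: "(1 / norm w) *\<^sub>R w \<in> T" if "w \<in> S" "w \<noteq> 0" for w
    using that S by (simp add: T_def subspace_scale)
  have "compact T"
    unfolding T_def using closed_subspace[OF S] compact_sphere by (rule closed_Int_compact)
  moreover have "T \<noteq> {}" using nontriv S normalize_in_T subspace_0 by blast
  moreover have "continuous_on T q" unfolding q_def by (intro continuous_intros)
  ultimately obtain v where v: "v \<in> T" and vmax: "\<And>y. y \<in> T \<Longrightarrow> q y \<le> q v"
    using continuous_attains_sup by metis
  have "q w \<le> q v * (w \<bullet> w)" if w: "w \<in> S" for w
  proof (cases "w = 0")
    case False
    have "(1 / norm w)\<^sup>2 * q w = q ((1 / norm w) *\<^sub>R w)"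
      by (simp add: q_def matrix_vector_mult_scaleR power2_eq_square)
    also have "\<dots> \<le> q v" using vmax normalize_in_T[OF w False] by blast
    finally show ?thesis
      using False by (simp add: field_simps power2_eq_square flip: power2_norm_eq_inner)
  qed (simp add: q_def)
  then show thesis using that v by (auto simp: T_def q_def)
qed

lemma symmetric_invariant_subspace_eigenbasis:
  fixes K :: "real^'n::finite^'n"
  assumes sym: "transpose K = K"
  shows "subspace S \<Longrightarrow> \<forall>x\<in>S. K *v x \<in> S \<Longrightarrow>
    \<exists>B. B \<subseteq> S \<and> pairwise orthogonal B \<and> span B = S \<and>
        (\<forall>v\<in>B. norm v = 1 \<and> K *v v = (v \<bullet> (K *v v)) *\<^sub>R v)"
proof (induction "dim S" arbitrary: S rule: less_induct)
  case less
  show ?case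
  proof (cases "S = {0}")
    case True
    then show ?thesis by (intro exI[of _ "{}"]) auto
  next
    case False
    obtain v where v: "v \<in> S" "norm v = 1"
      and vmax: "\<And>w. w \<in> S \<Longrightarrow> w \<bullet> (K *v w) \<le> (v \<bullet> (K *v v)) * (w \<bullet> w)"
      using rayleigh_quotient_attains_max[OF less.prems(1) False] by blast
    have vv: "v \<bullet> v = 1" using v(2) by (simp add: norm_eq_1)
    have Kv: "K *v v = (v \<bullet> (K *v v)) *\<^sub>R v"
      using rayleigh_max_imp_eigenvector[OF sym less.prems vmax v(1)] vv by simp
    define S' where "S' = S \<inter> {y. v \<bullet> y = 0}"
    have "subspace S'"
      unfolding S'_def by (rule subspace_inter[OF less.prems(1) subspace_hyperplane])
    moreover have "K *v y \<in> S'" if "y \<in> S'" for y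
    proof -
      have "v \<bullet> (K *v y) = (K *v v) \<bullet> y" by (simp add: symmetric_matrix_inner[OF sym])
      also have "\<dots> = 0" using that by (subst Kv) (simp add: S'_def)
      finally show ?thesis using that less.prems(2) by (simp add: S'_def)
    qed
    moreover have "dim S' < dim S"
    proof -
      have "v \<notin> S'" using vv by (simp add: S'_def)
      then have "S' \<subset> S" using v(1) unfolding S'_def by blast
      then show ?thesis
        using \<open>subspace S'\<close> less.prems(1) by (metis dim_psubset span_eq_iff)
    qed
    ultimately obtain B' where B': "B' \<subseteq> S'" "pairwise orthogonal B'" "span B' = S'"
      "\<forall>v\<in>B'. norm v = 1 \<and> K *v v = (v \<bullet> (K *v v)) *\<^sub>R v"
      using less.hyps by blast
    have "S \<subseteq> span (insert v B')"
    proof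
      fix y assume "y \<in> S"
      then have "y - (v \<bullet> y) *\<^sub>R v \<in> S'" using v(1) vv less.prems(1)
        by (simp add: S'_def subspace_diff subspace_scale inner_diff_right)
      then show "y \<in> span (insert v B')" using B'(3) span_breakdown_eq by blast
    qed
    then have "span (insert v B') = S"
      using v(1) B'(1) less.prems(1) by (intro span_subspace) (auto simp: S'_def)
    moreover have "pairwise orthogonal (insert v B')"
      using B'(1,2) by (auto simp: pairwise_insert S'_def orthogonal_def inner_commute)
    ultimately show ?thesis
      using v B' Kv by (intro exI[of _ "insert v B'"]) (auto simp: S'_def)
  qed
qed

definition orthonormal_basis :: "(real^'n::finite) set \<Rightarrow> bool" where
  "orthonormal_basis B \<longleftrightarrow>
     finite B \<and> pairwise orthogonal B \<and> (\<forall>v\<in>B. norm v = 1) \<and> span B = UNIV"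

lemma orthonormal_basis_imp_finite: "orthonormal_basis B \<Longrightarrow> finite B"
  by (simp add: orthonormal_basis_def)

lemma symmetric_matrix_eigenbasis:
  fixes K :: "real^'n::finite^'n"
  assumes "transpose K = K"
  obtains B where "orthonormal_basis B" "\<And>v. v \<in> B \<Longrightarrow> K *v v = (v \<bullet> (K *v v)) *\<^sub>R v"
proof -
  obtain B where B: "pairwise orthogonal B" "span B = UNIV"
    "\<forall>v\<in>B. norm v = 1 \<and> K *v v = (v \<bullet> (K *v v)) *\<^sub>R v"
    using symmetric_invariant_subspace_eigenbasis[OF assms, of UNIV] by auto
  have "independent B"
    using B(1,3) by (intro pairwise_orthogonal_independent) auto
  then have "finite B" by (rule independent_imp_finite)
  then show thesis using that B unfolding orthonormal_basis_def by blast
qed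

definition outer_prod :: "real^'n::finite \<Rightarrow> real^'n^'n" where
  "outer_prod v = (\<chi> i j. v$i * v$j)"

definition spectral_matrix :: "(real^'n::finite) set \<Rightarrow> (real^'n \<Rightarrow> real) \<Rightarrow> real^'n^'n" where
  "spectral_matrix B f = (\<Sum>v\<in>B. f v *\<^sub>R outer_prod v)"

lemma outer_prod_mult_vec: "outer_prod v *v x = (v \<bullet> x) *\<^sub>R v"
  by (simp add: outer_prod_def matrix_vector_mult_def inner_vec_def vec_eq_iff
      sum_distrib_left mult_ac)

lemma sum_matrix_vector_mult:
  "finite B \<Longrightarrow> (\<Sum>v\<in>B. A v) *v x = (\<Sum>v\<in>B. A v *v x)"
  by (induction B rule: finite_induct) (auto simp: matrix_vector_mult_add_rdistrib)

lemma spectral_matrix_mult_vec: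
  "finite B \<Longrightarrow> spectral_matrix B f *v x = (\<Sum>v\<in>B. (f v * (v \<bullet> x)) *\<^sub>R v)"
  unfolding spectral_matrix_def
  by (simp add: sum_matrix_vector_mult outer_prod_mult_vec flip: scaleR_matrix_vector_assoc)

lemma orthonormal_basis_inner:
  assumes "orthonormal_basis B" "v \<in> B" "w \<in> B"
  shows "v \<bullet> w = (if v = w then 1 else 0)"
  using assms unfolding orthonormal_basis_def
  by (auto simp: norm_eq_1 orthogonal_def pairwise_def)

lemma orthonormal_basis_inner_sum:
  assumes B: "orthonormal_basis B" and "v \<in> B"
  shows "v \<bullet> (\<Sum>w\<in>B. a w *\<^sub>R w) = a v"
proof -
  have "v \<bullet> (\<Sum>w\<in>B. a w *\<^sub>R w) = (\<Sum>w\<in>B. if w = v then a w else 0)"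
    unfolding inner_sum_right by (rule sum.cong) (auto simp: orthonormal_basis_inner[OF B \<open>v \<in> B\<close>])
  then show ?thesis using B \<open>v \<in> B\<close> by (simp add: orthonormal_basis_def)
qed

lemma orthonormal_basis_expansion:
  assumes B: "orthonormal_basis B"
  shows "x = (\<Sum>v\<in>B. (v \<bullet> x) *\<^sub>R v)"
proof -
  have "finite B" "x \<in> span B" using B by (auto simp: orthonormal_basis_def)
  then obtain a where a: "x = (\<Sum>v\<in>B. a v *\<^sub>R v)" using span_finite by blast
  then have "v \<bullet> x = a v" if "v \<in> B" for v using orthonormal_basis_inner_sum[OF B that] by simp
  then show ?thesis using a by (metis (no_types, lifting) sum.cong)
qed

lemma orthonormal_basis_norm_sum:
  assumes B: "orthonormal_basis B"
  shows "(norm (\<Sum>v\<in>B. a v *\<^sub>R v))\<^sup>2 = (\<Sum>v\<in>B. (a v)\<^sup>2)"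
  unfolding power2_norm_eq_inner
  by (simp add: inner_sum_left orthonormal_basis_inner_sum[OF B] power2_eq_square)

lemma spectral_matrix_mult:
  assumes B: "orthonormal_basis B"
  shows "spectral_matrix B f ** spectral_matrix B g = spectral_matrix B (\<lambda>v. f v * g v)"
  unfolding matrix_eq
  by (simp add: spectral_matrix_mult_vec[OF orthonormal_basis_imp_finite[OF B]]
      orthonormal_basis_inner_sum[OF B] mult_ac flip: matrix_vector_mul_assoc)

lemma spectral_matrix_one:
  assumes B: "orthonormal_basis B"
  shows "spectral_matrix B (\<lambda>_. 1) = mat 1"
  unfolding matrix_eq
  by (simp add: spectral_matrix_mult_vec[OF orthonormal_basis_imp_finite[OF B]]
      flip: orthonormal_basis_expansion[OF B])

lemma transpose_spectral_matrix: "transpose (spectral_matrix B f) = spectral_matrix B f"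
  by (simp add: spectral_matrix_def outer_prod_def vec_eq_iff transpose_def mult_ac)

lemma spectral_matrix_diff: "spectral_matrix B f - spectral_matrix B g = spectral_matrix B (\<lambda>v. f v - g v)"
  unfolding spectral_matrix_def by (simp add: sum_subtractf scaleR_diff_left)

lemma spectral_matrix_scaleR: "c *\<^sub>R spectral_matrix B f = spectral_matrix B (\<lambda>v. c * f v)"
  unfolding spectral_matrix_def by (simp add: scaleR_sum_right)

lemma mat_pow_spectral_matrix:
  "orthonormal_basis B \<Longrightarrow> mat_pow (spectral_matrix B f) k = spectral_matrix B (\<lambda>v. f v ^ k)"
  by (induction k) (simp_all add: spectral_matrix_one spectral_matrix_mult)

lemma mat_exp_spectral_matrix:
  assumes B: "orthonormal_basis B"
  shows "mat_exp (spectral_matrix B f) = spectral_matrix B (\<lambda>v. exp (f v))"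
proof -
  have "(\<lambda>k. (f v ^ k / fact k) *\<^sub>R outer_prod v) sums (exp (f v) *\<^sub>R outer_prod v)" for v
    using sums_scaleR_left[OF exp_converges] by (simp add: divide_inverse mult_ac)
  then have "(\<lambda>k. \<Sum>v\<in>B. (f v ^ k / fact k) *\<^sub>R outer_prod v) sums spectral_matrix B (\<lambda>v. exp (f v))"
    unfolding spectral_matrix_def by (rule sums_sum)
  moreover have "(1 / fact k) *\<^sub>R mat_pow (spectral_matrix B f) k
      = (\<Sum>v\<in>B. (f v ^ k / fact k) *\<^sub>R outer_prod v)" for k
    by (simp add: mat_pow_spectral_matrix[OF B] spectral_matrix_scaleR)
      (simp add: spectral_matrix_def)
  ultimately show ?thesis unfolding mat_exp_def by (simp add: sums_iff)
qed

lemma spec_norm_spectral_matrix_le: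
  assumes B: "orthonormal_basis B" and "b \<ge> 0" and bound: "\<And>v. v \<in> B \<Longrightarrow> \<bar>g v\<bar> \<le> b"
  shows "spec_norm (spectral_matrix B g) \<le> b"
  unfolding spec_norm_def
proof (rule onorm_le)
  fix x
  have "(norm (spectral_matrix B g *v x))\<^sup>2 = (\<Sum>v\<in>B. (g v)\<^sup>2 * (v \<bullet> x)\<^sup>2)"
    by (simp add: spectral_matrix_mult_vec[OF orthonormal_basis_imp_finite[OF B]]
        orthonormal_basis_norm_sum[OF B]
        power_mult_distrib)
  also have "\<dots> \<le> (\<Sum>v\<in>B. b\<^sup>2 * (v \<bullet> x)\<^sup>2)"
    using bound \<open>b \<ge> 0\<close> by (intro sum_mono mult_right_mono) (auto simp: power2_le_iff_abs_le)
  also have "\<dots> = (b * norm x)\<^sup>2"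
    using orthonormal_basis_norm_sum[OF B, of "\<lambda>v. v \<bullet> x"]
    by (simp add: sum_distrib_left power_mult_distrib flip: orthonormal_basis_expansion[OF B])
  finally show "norm (spectral_matrix B g *v x) \<le> b * norm x"
    by (rule power2_le_imp_le) (simp add: \<open>b \<ge> 0\<close>)
qed

lemma spectral_matrix_mult_basis_vec:
  assumes B: "orthonormal_basis B" and "v \<in> B"
  shows "spectral_matrix B f *v v = f v *\<^sub>R v"
proof -
  have "(\<Sum>w\<in>B. (f w * (w \<bullet> v)) *\<^sub>R w) = (\<Sum>w\<in>B. if w = v then f w *\<^sub>R w else 0)"
    by (rule sum.cong) (auto simp: orthonormal_basis_inner[OF B _ \<open>v \<in> B\<close>])
  then show ?thesis
    using orthonormal_basis_imp_finite[OF B] \<open>v \<in> B\<close> by (simp add: spectral_matrix_mult_vec)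
qed

lemma eigenbasis_spectral_decomposition:
  assumes B: "orthonormal_basis B" and eig: "\<And>v. v \<in> B \<Longrightarrow> K *v v = (v \<bullet> (K *v v)) *\<^sub>R v"
  shows "K = spectral_matrix B (\<lambda>v. v \<bullet> (K *v v))"
  unfolding matrix_eq
proof
  fix x
  have "K *v x = (\<Sum>v\<in>B. (v \<bullet> x) *\<^sub>R (K *v v))"
    by (subst orthonormal_basis_expansion[OF B, of x])
      (simp add: linear_sum[OF matrix_vector_mul_linear] o_def matrix_vector_mult_scaleR)
  also have "\<dots> = spectral_matrix B (\<lambda>v. v \<bullet> (K *v v)) *v x"
    unfolding spectral_matrix_mult_vec[OF orthonormal_basis_imp_finite[OF B]]
    using eig by (intro sum.cong refl) (metis scaleR_scaleR mult.commute)
  finally show "K *v x = spectral_matrix B (\<lambda>v. v \<bullet> (K *v v)) *v x" .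
qed

lemma eigenvalue_of_spectral_matrix:
  assumes B: "orthonormal_basis B" and "is_eigenvalue (spectral_matrix B f) \<mu>"
  shows "\<mu> \<in> f ` B"
proof -
  obtain u where u: "u \<noteq> 0" "spectral_matrix B f *v u = \<mu> *\<^sub>R u"
    using assms(2) by (auto simp: is_eigenvalue_def)
  obtain w where w: "w \<in> B" "w \<bullet> u \<noteq> 0"
    using orthonormal_basis_expansion[OF B, of u] u(1) by (metis (no_types, lifting) scale_eq_0_iff sum.neutral)
  have "\<mu> * (w \<bullet> u) = w \<bullet> (spectral_matrix B f *v u)" using u(2) by simp
  also have "\<dots> = f w * (w \<bullet> u)"
    using B w(1) by (simp add: spectral_matrix_mult_vec orthonormal_basis_def orthonormal_basis_inner_sum)
  finally show ?thesis using w by auto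
qed

lemma spectral_matrix_le_lambda_max:
  assumes B: "orthonormal_basis B" and "v \<in> B"
  shows "f v \<le> lambda_max (spectral_matrix B f)"
proof -
  have "{\<mu>. is_eigenvalue (spectral_matrix B f) \<mu>} \<subseteq> f ` B"
    using eigenvalue_of_spectral_matrix[OF B] by blast
  then have "finite {\<mu>. is_eigenvalue (spectral_matrix B f) \<mu>}"
    using B by (auto simp: orthonormal_basis_def intro: finite_subset)
  moreover have "v \<noteq> 0" using assms by (auto simp: orthonormal_basis_def)
  then have "is_eigenvalue (spectral_matrix B f) (f v)"
    using spectral_matrix_mult_basis_vec[OF assms] by (auto simp: is_eigenvalue_def)
  ultimately show ?thesis by (simp add: lambda_max_def)
qed

lemma laplacian_eq_sum_outer_prod:
  "laplacian E = (\<Sum>j<length E. outer_prod (\<chi> i. incidence E i j))"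
  by (simp add: laplacian_def outer_prod_def vec_eq_iff sum_component)

lemma transpose_laplacian: "transpose (laplacian E) = laplacian E"
  by (simp add: vec_eq_iff transpose_def laplacian_def mult.commute)

lemma laplacian_quadratic_form_nonneg: "0 \<le> x \<bullet> (laplacian E *v x)"
  by (simp add: laplacian_eq_sum_outer_prod sum_matrix_vector_mult outer_prod_mult_vec
      inner_sum_right inner_commute sum_nonneg)

lemma power_diff_le_mult_diff:
  fixes a b :: real
  assumes "0 \<le> a" "a \<le> b" "b \<le> 1"
  shows "b ^ n - a ^ n \<le> real n * (b - a)"
proof (induction n)
  case (Suc n)
  have "b ^ Suc n - a ^ Suc n = b * (b ^ n - a ^ n) + a ^ n * (b - a)"
    by (simp add: algebra_simps)
  also have "\<dots> \<le> (b ^ n - a ^ n) + (b - a)"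
    using assms by (intro add_mono)
      (simp_all add: power_mono power_le_one mult_left_le_one_le mult_left_le)
  also have "\<dots> \<le> real (Suc n) * (b - a)" using Suc by (simp add: algebra_simps)
  finally show ?case .
qed simp

lemma exp_minus_le_quadratic:
  fixes t :: real
  assumes "0 \<le> t"
  shows "exp (- t) \<le> 1 - t + t\<^sup>2"
proof -
  have "exp (- t) \<le> 1 / (1 + t)"
    using assms exp_ge_add_one_self[of t] by (simp add: exp_minus field_simps)
  also have "\<dots> \<le> 1 - t + t\<^sup>2" using assms by (simp add: field_simps power2_eq_square)
  finally show ?thesis .
qed

lemma compound_interest_error:
  fixes y :: real and N :: nat
  assumes "N \<ge> 1" "0 \<le> y" "y \<le> real N"
  shows "\<bar>(1 - y / real N) ^ N - exp (- y)\<bar> \<le> y\<^sup>2 / real N"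
proof -
  define t where "t = y / real N"
  have N: "real N > 0" using assms by simp
  have t: "0 \<le> t" "t \<le> 1" using assms N by (auto simp: t_def field_simps)
  have lower: "1 - t \<le> exp (- t)" using exp_ge_add_one_self[of "- t"] by simp
  have "exp (- y) = exp (- t) ^ N"
    using N by (simp add: t_def flip: exp_of_nat_mult)
  then have "\<bar>(1 - t) ^ N - exp (- y)\<bar> = exp (- t) ^ N - (1 - t) ^ N"
    using t lower by (simp add: power_mono)
  also have "\<dots> \<le> real N * (exp (- t) - (1 - t))"
    using t lower by (intro power_diff_le_mult_diff) auto
  also have "\<dots> \<le> real N * t\<^sup>2"
    using exp_minus_le_quadratic[OF t(1)] N by simp
  also have "\<dots> = y\<^sup>2 / real N" using N by (simp add: t_def power2_eq_square field_simps)
  finally show ?thesis by (simp add: t_def)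
qed

lemma layer_identity_weights:
  fixes Z :: "real^'n::finite^'n"
  assumes "transpose Z = Z"
  shows "layer (mat 1) (mat 1) (mat 1) (- mat 1) Z = Z ** Z ** Z"
proof -
  have "(- A) ** Z = - (A ** Z)" for A :: "real^'n^'n"
    by (simp add: vec_eq_iff matrix_matrix_mult_def sum_negf)
  then show ?thesis using assms by (simp add: layer_def)
qed

lemma transformer_spectral_matrix:
  assumes B: "orthonormal_basis B"
  shows "transformer (\<lambda>_. mat 1) (\<lambda>_. mat 1) (\<lambda>_. mat 1) (\<lambda>_. - mat 1) (spectral_matrix B c) l
       = spectral_matrix B (\<lambda>v. c v ^ 3 ^ l)"
proof (induction l)
  case (Suc l)
  have "c v ^ 3 ^ l * c v ^ 3 ^ l * c v ^ 3 ^ l = c v ^ 3 ^ Suc l" for v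
    by (metis power3_eq_cube power_Suc power_mult mult.commute)
  then show ?case
    by (simp add: Suc layer_identity_weights transpose_spectral_matrix spectral_matrix_mult[OF B])
qed simp

lemma compound_interest_error_pow3:
  fixes s \<mu> M :: real and L :: nat
  assumes "s > 0" "0 \<le> \<mu>" "\<mu> \<le> M" "s * M \<le> 3 ^ L"
  shows "\<bar>(1 - s / 3 ^ L * \<mu>) ^ 3 ^ L - exp (- s * \<mu>)\<bar> \<le> 3 powr (1 - real L) * s\<^sup>2 * M\<^sup>2"
proof -
  have s\<mu>: "0 \<le> s * \<mu>" "s * \<mu> \<le> s * M" using assms by (simp_all add: mult_left_mono)
  have "\<bar>(1 - s / 3 ^ L * \<mu>) ^ 3 ^ L - exp (- s * \<mu>)\<bar>
      = \<bar>(1 - s * \<mu> / real (3 ^ L)) ^ 3 ^ L - exp (- (s * \<mu>))\<bar>"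
    by simp
  also have "\<dots> \<le> (s * \<mu>)\<^sup>2 / real (3 ^ L)"
    using s\<mu> assms(4) by (intro compound_interest_error) auto
  also have "\<dots> \<le> 3 * (s * M)\<^sup>2 / real (3 ^ L)"
    using power_mono[OF s\<mu>(2,1), of 2] zero_le_power2[of "s * M"]
    by (intro divide_right_mono) linarith+
  also have "\<dots> = 3 powr (1 - real L) * s\<^sup>2 * M\<^sup>2"
    by (simp add: powr_diff powr_realpow power_mult_distrib)
  finally show ?thesis .
qed

lemma transformer_identity_weights_error:
  fixes E :: "'n::finite graph"
  assumes "s > 0" and small: "s * lambda_max (laplacian E) \<le> 3 ^ L"
  shows "spec_norm (transformer (\<lambda>_. mat 1) (\<lambda>_. mat 1) (\<lambda>_. mat 1) (\<lambda>_. - mat 1)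
            (transpose (mat 1 - (s / 3 ^ L) *\<^sub>R laplacian E)) L - mat_exp (- s *\<^sub>R laplacian E))
         \<le> 3 powr (1 - real L) * s\<^sup>2 * (lambda_max (laplacian E))\<^sup>2"
proof -
  obtain B where B: "orthonormal_basis B"
    and eig: "\<And>v. v \<in> B \<Longrightarrow> laplacian E *v v = (v \<bullet> (laplacian E *v v)) *\<^sub>R v"
    using symmetric_matrix_eigenbasis[OF transpose_laplacian] by blast
  define \<kappa> where "\<kappa> v = v \<bullet> (laplacian E *v v)" for v
  have K: "laplacian E = spectral_matrix B \<kappa>"
    unfolding \<kappa>_def by (rule eigenbasis_spectral_decomposition[OF B eig])
  have Z0: "transpose (mat 1 - (s / 3 ^ L) *\<^sub>R laplacian E)
      = spectral_matrix B (\<lambda>v. 1 - s / 3 ^ L * \<kappa> v)"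
    unfolding K spectral_matrix_one[OF B, symmetric] spectral_matrix_scaleR spectral_matrix_diff
      transpose_spectral_matrix ..
  have "transformer (\<lambda>_. mat 1) (\<lambda>_. mat 1) (\<lambda>_. mat 1) (\<lambda>_. - mat 1)
          (transpose (mat 1 - (s / 3 ^ L) *\<^sub>R laplacian E)) L - mat_exp (- s *\<^sub>R laplacian E)
      = spectral_matrix B (\<lambda>v. (1 - s / 3 ^ L * \<kappa> v) ^ 3 ^ L - exp (- s * \<kappa> v))"
    unfolding Z0 transformer_spectral_matrix[OF B]
    unfolding K spectral_matrix_scaleR mat_exp_spectral_matrix[OF B] spectral_matrix_diff by simp
  also have "spec_norm \<dots> \<le> 3 powr (1 - real L) * s\<^sup>2 * (lambda_max (laplacian E))\<^sup>2"
  proof (rule spec_norm_spectral_matrix_le[OF B])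
    fix v assume "v \<in> B"
    have "0 \<le> \<kappa> v" unfolding \<kappa>_def by (rule laplacian_quadratic_form_nonneg)
    moreover have "\<kappa> v \<le> lambda_max (laplacian E)"
      unfolding K using spectral_matrix_le_lambda_max[OF B \<open>v \<in> B\<close>] .
    ultimately show "\<bar>(1 - s / 3 ^ L * \<kappa> v) ^ 3 ^ L - exp (- s * \<kappa> v)\<bar>
        \<le> 3 powr (1 - real L) * s\<^sup>2 * (lambda_max (laplacian E))\<^sup>2"
      using \<open>s > 0\<close> small by (intro compound_interest_error_pow3) auto
  qed simp
  finally show ?thesis .
qed

theorem lemma5:
  fixes s :: real and L :: nat
  assumes "L \<ge> 1" and "s > 0"
  shows "\<exists>WV WQ WK WR :: nat \<Rightarrow> real^'n::finite^'n.
     \<forall>E :: 'n graph. valid_graph E \<longrightarrow>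
       s * lambda_max (laplacian E) \<le> 3 ^ L \<longrightarrow>
       spec_norm (transformer WV WQ WK WR
                    (transpose (mat 1 - (s / 3 ^ L) *\<^sub>R laplacian E)) L
                  - mat_exp (- s *\<^sub>R laplacian E))
         \<le> (3::real) powr (1 - real L) * s\<^sup>2 * (lambda_max (laplacian E))\<^sup>2"
  using transformer_identity_weights_error[OF \<open>s > 0\<close>] by blast

end
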